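(* Let $A(z,\lambda)=\sum_{i\ge0}A_i(z)\lambda^i\in\mathfrak{gl}_2(\mathbb{C}((z))[[\lambda]])$ and $R(z,\lambda)\in\mathrm{GL}_2(\mathbb{C}((z))[[\lambda]])$ satisfy: (1) $A(z,\lambda)$ is diagonal; (2) $R(z,0)\in\mathfrak{gl}_2(\mathbb{C}[[z]])$; (3) $\det R(z,0)\in\mathbb{C}[[z]]$ has a first-order zero at $z=0$; (4) $\tilde A:=R^{-1}AR+\lambda R^{-1}\frac{dR}{dz}\in\mathfrak{gl}_2(\mathbb{C}[[z,\lambda]])$. Then $A_1(z)\in z^{-1}\mathfrak{gl}_2(\mathbb{C}[[z]])$. *)

theory Defs
  imports "HOL-Analysis.Analysis" "HOL-Computational_Algebra.Formal_Laurent_Series"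
begin

text \<open>Elements of C((z))[[lambda]] are modelled as complex fls fps
  (power series in lambda with Laurent-series-in-z coefficients);
  2x2 matrices over them as complex fls fps ^2^2.\<close>

type_synonym mat2 = "complex fls fps ^ 2 ^ 2"

definition fps_dz :: "complex fls fps \<Rightarrow> complex fls fps" where
  "fps_dz f = Abs_fps (\<lambda>n. fls_deriv (fps_nth f n))"

definition mat_dz :: "mat2 \<Rightarrow> mat2" where
  "mat_dz M = (\<chi> i j. fps_dz (M $ i $ j))"

definition mat_lam :: "mat2 \<Rightarrow> mat2" where
  "mat_lam M = (\<chi> i j. fps_X * (M $ i $ j))"

definition mat_coeff :: "nat \<Rightarrow> mat2 \<Rightarrow> complex fls ^ 2 ^ 2" where
  "mat_coeff k M = (\<chi> i j. fps_nth (M $ i $ j) k)"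

text \<open>A Laurent series lies in C[[z]] iff its subdegree is nonnegative (0 has subdegree 0).\<close>
definition in_Cz :: "complex fls \<Rightarrow> bool" where
  "in_Cz f \<longleftrightarrow> fls_subdegree f \<ge> 0"

definition in_gl2_Czl :: "mat2 \<Rightarrow> bool" where
  "in_gl2_Czl M \<longleftrightarrow> (\<forall>i j k. in_Cz (fps_nth (M $ i $ j) k))"

end

theory Submission
  imports Defs
begin

text \<open>Write \<open>R\<^sub>k, A\<^sub>k, T\<^sub>k\<close> for the \<open>\<lambda>\<^sup>k\<close>-coefficients of \<open>R\<close>, \<open>A\<close> and
  \<open>T = R\<^sup>-\<^sup>1 A R + \<lambda> R\<^sup>-\<^sup>1 R'\<close>. Comparing the coefficients of \<open>\<lambda>\<^sup>0\<close> and \<open>\<lambda>\<^sup>1\<close> in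
  \<open>R T = A R + \<lambda> R'\<close> gives \<open>R\<^sub>0 T\<^sub>0 = A\<^sub>0 R\<^sub>0\<close> and
  \<open>R\<^sub>0 T\<^sub>1 + R\<^sub>1 T\<^sub>0 = A\<^sub>0 R\<^sub>1 + A\<^sub>1 R\<^sub>0 + R\<^sub>0'\<close>. Multiplying both on the right by the
  adjugate \<open>B\<close> of \<open>R\<^sub>0\<close> (so \<open>R\<^sub>0 B = B R\<^sub>0 = det R\<^sub>0\<close>) turns the first into
  \<open>T\<^sub>0 B = B A\<^sub>0\<close>, and then the second into
  \<open>R\<^sub>0 T\<^sub>1 B + R\<^sub>1 B A\<^sub>0 = A\<^sub>0 R\<^sub>1 B + det R\<^sub>0 A\<^sub>1 + R\<^sub>0' B\<close>.
  Since \<open>A\<^sub>0\<close> is diagonal, \<open>X A\<^sub>0\<close> and \<open>A\<^sub>0 X\<close> have the same diagonal, so every diagonal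
  entry of \<open>det R\<^sub>0 A\<^sub>1\<close> is one of \<open>R\<^sub>0 T\<^sub>1 B - R\<^sub>0' B\<close>, which lies in \<open>\<complex>[[z]]\<close>.
  As \<open>det R\<^sub>0\<close> vanishes to first order, the diagonal of \<open>A\<^sub>1\<close> has at most simple poles;
  its off-diagonal entries vanish.\<close>

lemma in_Cz_iff: "in_Cz f \<longleftrightarrow> (\<forall>k<0. fls_nth f k = 0)"
  unfolding in_Cz_def
  by (metis fls_eq0_below_subdegree fls_subdegree_ge0I less_le_trans)

lemma in_Cz_diff: "in_Cz f \<Longrightarrow> in_Cz g \<Longrightarrow> in_Cz (f - g)"
  by (simp add: in_Cz_iff)

lemma in_Cz_uminus: "in_Cz f \<Longrightarrow> in_Cz (- f)"
  by (simp add: in_Cz_iff)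

lemma in_Cz_sum: "(\<And>x. x \<in> S \<Longrightarrow> in_Cz (f x)) \<Longrightarrow> in_Cz (\<Sum>x\<in>S. f x)"
  by (simp add: in_Cz_iff fls_nth_sum)

lemma in_Cz_mult: "in_Cz f \<Longrightarrow> in_Cz g \<Longrightarrow> in_Cz (f * g)"
  unfolding in_Cz_def
  by (metis add_nonneg_nonneg fls_subdegree_mult mult_eq_0_iff order.refl)

lemma in_Cz_fls_deriv: "in_Cz f \<Longrightarrow> in_Cz (fls_deriv f)"
  unfolding in_Cz_iff
proof (intro allI impI)
  fix k :: int
  assume "\<forall>k<0. fls_nth f k = 0" "k < 0"
  then show "fls_nth (fls_deriv f) k = 0"
    by (cases "k + 1 = 0") simp_all
qed

lemma subdegree_ge_if_in_Cz_mult: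
  assumes "d \<noteq> 0" "0 \<le> fls_subdegree d" "in_Cz (d * x)"
  shows "- fls_subdegree d \<le> fls_subdegree x"
proof (cases "x = 0")
  case False
  with assms show ?thesis
    unfolding in_Cz_def by simp
qed (use assms in simp)

definition in_gl_Cz :: "complex fls ^ 'n ^ 'm \<Rightarrow> bool" where
  "in_gl_Cz M \<longleftrightarrow> (\<forall>i j. in_Cz (M $ i $ j))"

lemma in_gl_Cz_diff: "in_gl_Cz M \<Longrightarrow> in_gl_Cz N \<Longrightarrow> in_gl_Cz (M - N)"
  by (simp add: in_gl_Cz_def in_Cz_diff)

lemma in_gl_Cz_matrix_mult: "in_gl_Cz M \<Longrightarrow> in_gl_Cz N \<Longrightarrow> in_gl_Cz (M ** N)"
  by (simp add: in_gl_Cz_def matrix_matrix_mult_def in_Cz_sum in_Cz_mult)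

lemma in_gl_Cz_mat_coeff: "in_gl2_Czl M \<Longrightarrow> in_gl_Cz (mat_coeff k M)"
  by (simp add: in_gl2_Czl_def in_gl_Cz_def mat_coeff_def)

lemma mat_coeff_mat_dz: "mat_coeff k (mat_dz M) $ i $ j = fls_deriv (mat_coeff k M $ i $ j)"
  by (simp add: mat_coeff_def mat_dz_def fps_dz_def)

lemma in_gl_Cz_mat_dz: "in_gl_Cz (mat_coeff k M) \<Longrightarrow> in_gl_Cz (mat_coeff k (mat_dz M))"
  by (simp add: in_gl_Cz_def mat_coeff_mat_dz in_Cz_fls_deriv)

definition adjugate2 :: "'a::comm_ring_1 ^ 2 ^ 2 \<Rightarrow> 'a ^ 2 ^ 2" where
  "adjugate2 M = vector [vector [M $ 2 $ 2, - M $ 1 $ 2], vector [- M $ 2 $ 1, M $ 1 $ 1]]"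

lemma adjugate2_matrix_mult: "adjugate2 M ** M = mat (det M)"
  by (simp add: adjugate2_def det_2 vec_eq_iff forall_2 matrix_matrix_mult_def sum_2 mat_def
      algebra_simps)

lemma matrix_mult_adjugate2: "M ** adjugate2 M = mat (det M)"
  by (simp add: adjugate2_def det_2 vec_eq_iff forall_2 matrix_matrix_mult_def sum_2 mat_def
      algebra_simps)

lemma in_gl_Cz_adjugate2: "in_gl_Cz M \<Longrightarrow> in_gl_Cz (adjugate2 M)"
  by (simp add: in_gl_Cz_def adjugate2_def forall_2 in_Cz_uminus)

lemma matrix_add_rdistrib: "(A + B) ** C = A ** C + B ** C"
  for A B :: "'a::semiring_1 ^ 'n ^ 'm"
  by (simp add: matrix_matrix_mult_def vec_eq_iff sum.distrib distrib_right)

lemma mat_matrix_mult_nth: "(mat c ** M) $ i $ j = c * M $ i $ j"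
  for M :: "'a::semiring_1 ^ 'n ^ 'm"
  by (simp add: matrix_matrix_mult_def mat_def if_distrib if_distribR sum.delta' cong: if_cong)

lemma matrix_mult_mat_nth: "(M ** mat c) $ i $ j = M $ i $ j * c"
  for M :: "'a::semiring_1 ^ 'n ^ 'm"
  by (simp add: matrix_matrix_mult_def mat_def if_distrib if_distribR sum.delta cong: if_cong)

lemma mat_matrix_mult_cancel:
  fixes M N :: "'a::idom ^ 'n ^ 'n"
  assumes "c \<noteq> 0" "mat c ** M = N ** mat c"
  shows "M = N"
proof -
  have "c * M $ i $ j = c * N $ i $ j" for i j
    using assms(2) by (metis mat_matrix_mult_nth matrix_mult_mat_nth mult.commute)
  with assms(1) show ?thesis
    by (simp add: vec_eq_iff)
qed

lemma matrix_mult_diagonal_nth_same: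
  fixes M D :: "'a::comm_semiring_1 ^ 'n ^ 'n"
  assumes "\<And>i j. i \<noteq> j \<Longrightarrow> D $ i $ j = 0"
  shows "(M ** D) $ i $ i = (D ** M) $ i $ i"
proof -
  have "(M ** D) $ i $ i = M $ i $ i * D $ i $ i"
    unfolding matrix_matrix_mult_def using assms
    by (simp add: sum.neutral sum.remove[of UNIV i])
  also have "\<dots> = (D ** M) $ i $ i"
    unfolding matrix_matrix_mult_def using assms
    by (simp add: sum.neutral sum.remove[of UNIV i] mult.commute)
  finally show ?thesis .
qed

lemma first_order_gauge_diagonal:
  fixes R0 R1 T0 T1 A0 A1 D :: "'a::idom ^ 2 ^ 2"
  assumes order0: "R0 ** T0 = A0 ** R0"
    and order1: "R0 ** T1 + R1 ** T0 = A0 ** R1 + A1 ** R0 + D"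
    and diagonal: "\<And>i j. i \<noteq> j \<Longrightarrow> A0 $ i $ j = 0"
    and "det R0 \<noteq> 0"
  shows "det R0 * A1 $ i $ i = (R0 ** T1 ** adjugate2 R0 - D ** adjugate2 R0) $ i $ i"
proof -
  define B where "B = adjugate2 R0"
  have "mat (det R0) ** (T0 ** B) = (B ** A0) ** mat (det R0)"
    using arg_cong[OF order0, of "\<lambda>M. B ** M ** B"]
    by (metis B_def adjugate2_matrix_mult matrix_mult_adjugate2 matrix_mul_assoc)
  then have T0B: "T0 ** B = B ** A0"
    by (rule mat_matrix_mult_cancel[OF \<open>det R0 \<noteq> 0\<close>])
  have RB: "R0 ** B = mat (det R0)"
    by (simp add: B_def matrix_mult_adjugate2)
  have "(R0 ** T1 + R1 ** T0) ** B = (A0 ** R1 + A1 ** R0 + D) ** B"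
    using order1 by simp
  then have "R0 ** T1 ** B + R1 ** (T0 ** B) = A0 ** R1 ** B + A1 ** (R0 ** B) + D ** B"
    by (simp add: matrix_add_rdistrib matrix_mul_assoc)
  then have "R0 ** T1 ** B + R1 ** B ** A0 = A0 ** (R1 ** B) + A1 ** mat (det R0) + D ** B"
    unfolding T0B RB by (simp add: matrix_mul_assoc)
  then have "(R0 ** T1 ** B + R1 ** B ** A0) $ i $ i
      = (A0 ** (R1 ** B) + A1 ** mat (det R0) + D ** B) $ i $ i"
    by simp
  then have "(R0 ** T1 ** B) $ i $ i + (R1 ** B ** A0) $ i $ i
      = (A0 ** (R1 ** B)) $ i $ i + A1 $ i $ i * det R0 + (D ** B) $ i $ i"
    by (simp add: matrix_mult_mat_nth)
  moreover have "(R1 ** B ** A0) $ i $ i = (A0 ** (R1 ** B)) $ i $ i"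
    using diagonal by (rule matrix_mult_diagonal_nth_same)
  ultimately show ?thesis
    by (simp add: B_def algebra_simps)
qed

lemma mat_coeff_add: "mat_coeff k (M + N) = mat_coeff k M + mat_coeff k N"
  by (simp add: mat_coeff_def vec_eq_iff)

lemma mat_coeff_0_mult: "mat_coeff 0 (M ** N) = mat_coeff 0 M ** mat_coeff 0 N"
  by (simp add: mat_coeff_def matrix_matrix_mult_def vec_eq_iff fps_sum_nth)

lemma mat_coeff_1_mult:
  "mat_coeff 1 (M ** N) = mat_coeff 0 M ** mat_coeff 1 N + mat_coeff 1 M ** mat_coeff 0 N"
  by (simp add: mat_coeff_def matrix_matrix_mult_def vec_eq_iff fps_sum_nth fps_mult_nth_1
      sum.distrib)

lemma mat_coeff_0_mat_lam: "mat_coeff 0 (mat_lam M) = 0"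
  by (simp add: mat_coeff_def mat_lam_def vec_eq_iff)

lemma mat_coeff_1_mat_lam: "mat_coeff 1 (mat_lam M) = mat_coeff 0 M"
  by (simp add: mat_coeff_def mat_lam_def vec_eq_iff)

lemma matrix_mult_mat_lam: "M ** mat_lam N = mat_lam (M ** N)"
  by (simp add: mat_lam_def matrix_matrix_mult_def vec_eq_iff sum_distrib_left mult.left_commute)

lemma matrix_mult_gauge_transform:
  assumes "invertible R"
  shows "R ** (matrix_inv R ** A ** R + mat_lam (matrix_inv R ** mat_dz R))
    = A ** R + mat_lam (mat_dz R)"
proof -
  have "R ** matrix_inv R = mat 1"
    using assms unfolding invertible_def matrix_inv_def by (rule someI_ex[THEN conjunct1])
  then show ?thesis
    by (simp add: matrix_add_ldistrib matrix_mult_mat_lam matrix_mul_assoc)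
qed

lemma gauge_coeff_0:
  assumes "R ** T = A ** R + mat_lam (mat_dz R)"
  shows "mat_coeff 0 R ** mat_coeff 0 T = mat_coeff 0 A ** mat_coeff 0 R"
  using arg_cong[OF assms, of "mat_coeff 0"]
  by (simp add: mat_coeff_0_mult mat_coeff_add mat_coeff_0_mat_lam)

lemma gauge_coeff_1:
  assumes "R ** T = A ** R + mat_lam (mat_dz R)"
  shows "mat_coeff 0 R ** mat_coeff 1 T + mat_coeff 1 R ** mat_coeff 0 T
    = mat_coeff 0 A ** mat_coeff 1 R + mat_coeff 1 A ** mat_coeff 0 R + mat_coeff 0 (mat_dz R)"
  using arg_cong[OF assms, of "mat_coeff 1"]
  unfolding mat_coeff_1_mult mat_coeff_add mat_coeff_1_mat_lam by (simp add: add_ac)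

theorem lemma4p11:
  fixes A R :: mat2
  assumes diag: "A $ 1 $ 2 = 0" "A $ 2 $ 1 = 0"
    and invR: "invertible R"
    and R0: "\<forall>i j. in_Cz (mat_coeff 0 R $ i $ j)"
    and detR0: "det (mat_coeff 0 R) \<noteq> 0" "fls_subdegree (det (mat_coeff 0 R)) = 1"
    and Atilde: "in_gl2_Czl (matrix_inv R ** A ** R + mat_lam (matrix_inv R ** mat_dz R))"
  shows "\<forall>i j. fls_subdegree (mat_coeff 1 A $ i $ j) \<ge> -1"
proof (intro allI)
  fix i j :: 2
  define T where "T = matrix_inv R ** A ** R + mat_lam (matrix_inv R ** mat_dz R)"
  define R\<^sub>0 where "R\<^sub>0 = mat_coeff 0 R"
  have off_diagonal: "A $ i $ j = 0" if "i \<noteq> j" for i j :: 2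
    using diag that exhaust_2[of i] exhaust_2[of j] by auto
  have gauge: "R ** T = A ** R + mat_lam (mat_dz R)"
    unfolding T_def using invR by (rule matrix_mult_gauge_transform)
  have R\<^sub>0_Cz: "in_gl_Cz R\<^sub>0"
    using R0 by (simp add: in_gl_Cz_def R\<^sub>0_def)
  moreover have "in_gl_Cz (mat_coeff 1 T)"
    using Atilde unfolding T_def by (rule in_gl_Cz_mat_coeff)
  moreover have "in_gl_Cz (mat_coeff 0 (mat_dz R))"
    using R\<^sub>0_Cz unfolding R\<^sub>0_def by (rule in_gl_Cz_mat_dz)
  ultimately have "in_gl_Cz (R\<^sub>0 ** mat_coeff 1 T ** adjugate2 R\<^sub>0
      - mat_coeff 0 (mat_dz R) ** adjugate2 R\<^sub>0)"
    by (intro in_gl_Cz_diff in_gl_Cz_matrix_mult in_gl_Cz_adjugate2)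
  moreover have "det R\<^sub>0 * mat_coeff 1 A $ i $ i = (R\<^sub>0 ** mat_coeff 1 T ** adjugate2 R\<^sub>0
      - mat_coeff 0 (mat_dz R) ** adjugate2 R\<^sub>0) $ i $ i"
    unfolding R\<^sub>0_def
    by (rule first_order_gauge_diagonal[OF gauge_coeff_0[OF gauge] gauge_coeff_1[OF gauge]
          _ detR0(1)])
      (simp add: mat_coeff_def off_diagonal)
  ultimately have "- 1 \<le> fls_subdegree (mat_coeff 1 A $ i $ i)"
    using subdegree_ge_if_in_Cz_mult[of "det R\<^sub>0"] detR0 unfolding R\<^sub>0_def in_gl_Cz_def
    by simp
  then show "fls_subdegree (mat_coeff 1 A $ i $ j) \<ge> -1"
    by (cases "i = j") (simp_all add: mat_coeff_def off_diagonal)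
qed

end
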